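(* Let $X$ be a measurable separable Banach space and $Y$ a measurable separable Banach space. Let $(\bar X,\bar Y)$ be an $X\times Y$-valued random variable with joint law $\mu$, let $\sigma$ be the law of $\bar Y$, and let $y\mapsto \pi_y$ be the posterior, i.e. $\pi_y$ is the conditional law of $\bar X$ given $\bar Y=y$, so that $\mu=\pi_{\bar Y}\otimes\sigma$. Let $\mathcal{G}\colon Y\to\mathcal{P}_X$ be a map assigning to each $y\in Y$ a probability measure $\mathcal{G}(y)$ on $X$, and assume that $y\mapsto \mathcal{W}(\mathcal{G}(y),\pi_y)$ is a measurable real-valued function on $Y$. Then \[ \mathbb{E}_{\bar Y\sim\sigma}\Bigl[\sup_{D_{\bar Y}\in \mathrm{Lip}(X)} \mathbb{E}_{\bar X'\sim \pi_{\bar Y},\ \bar V\sim\mathcal{G}(\bar Y)}\bigl[D_{\bar Y}(\bar X')-D_{\bar Y}(\bar V)\bigr]\Bigr] =\sup_{D\in \mathcal{D}(X\times Y)} \mathbb{E}_{(\bar X,\bar Y)\sim\mu,\ \bar V\sim\mathcal{G}(\bar Y)}\bigl[D(\bar X,\bar Y)-D(\bar V,\bar Y)\bigr]. \]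
   Context: $\mathcal{P}_X$ denotes the set of probability measures on $X$ for which the Wasserstein 1-distance is finite (the Wasserstein space). The Wasserstein 1-distance is $\mathcal{W}(p,q)=\inf_{\gamma\in\Pi(p,q)}\mathbb{E}_{(u,v)\sim\gamma}[\|u-v\|_X]$, where $\Pi(p,q)$ is the set of couplings of $p$ and $q$. $\mathrm{Lip}(X)$ denotes the set of real-valued $1$-Lipschitz maps on $X$, i.e. $|D(x_1)-D(x_2)|\le\|x_1-x_2\|_X$ for all $x_1,x_2\in X$. $\mathcal{D}(X\times Y)$ denotes the set of measurable maps $D\colon X\times Y\to\mathbb{R}$ such that $D(\cdot,y)\in\mathrm{Lip}(X)$ for every $y\in Y$. In the expectations, $\bar V\sim\mathcal{G}(\bar Y)$ means that conditionally on $\bar Y$, $\bar V$ is drawn from $\mathcal{G}(\bar Y)$. *)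

theory Defs
  imports "HOL-Probability.Probability"
begin

definition wasserstein_space :: "'a::{banach,second_countable_topology} measure set" where
  "wasserstein_space = {p. prob_space p \<and> sets p = sets borel \<and> (\<integral>\<^sup>+ x. ennreal (norm x) \<partial>p) < \<infinity>}"

definition couplings :: "'a::{banach,second_countable_topology} measure \<Rightarrow> 'a measure \<Rightarrow> ('a \<times> 'a) measure set" where
  "couplings p q = {\<gamma>. prob_space \<gamma> \<and> sets \<gamma> = sets (p \<Otimes>\<^sub>M q)
                          \<and> distr \<gamma> p fst = p \<and> distr \<gamma> q snd = q}"

definition wasserstein :: "'a::{banach,second_countable_topology} measure \<Rightarrow> 'a measure \<Rightarrow> ennreal" where
  "wasserstein p q = (INF \<gamma> \<in> couplings p q. \<integral>\<^sup>+ z. ennreal (norm (fst z - snd z)) \<partial>\<gamma>)"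

definition Lip1 :: "('a::metric_space \<Rightarrow> real) set" where
  "Lip1 = {D. 1-lipschitz_on UNIV D}"

definition Dset :: "('a::{banach,second_countable_topology} \<times> 'b::{banach,second_countable_topology} \<Rightarrow> real) set" where
  "Dset = {D. D \<in> borel_measurable (borel \<Otimes>\<^sub>M borel) \<and> (\<forall>y. (\<lambda>x. D (x, y)) \<in> Lip1)}"

end

theory Submission
  imports Defs
begin

text \<open>For fixed \<open>y\<close>, the supremum over \<open>D \<in> Lip(X)\<close> of the difference of the means of \<open>D\<close>
  under \<open>\<pi> y\<close> and under \<open>G y\<close> is already a supremum over one countable family of bounded
  1-Lipschitz functions: truncated McShane envelopes \<open>min\<^sub>i (r\<^sub>i + dist x (d n\<^sub>i))\<close> over a dense
  sequence \<open>d\<close> with rational \<open>r\<^sub>i\<close> approximate every 1-Lipschitz function pointwise under an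
  integrable majorant, so dominated convergence applies. Hence the left integrand is the increasing
  limit of the running maxima over this family. Choosing, measurably in \<open>y\<close>, an index that
  realises the running maximum glues the family into a critic \<open>D (x, y)\<close> in \<open>\<D>(X \<times> Y)\<close>;
  disintegrating \<open>\<mu>\<close> along \<open>\<sigma>\<close> shows that its value on the right is the integral of that
  running maximum, and monotone convergence gives \<open>\<le>\<close>. Conversely, every critic in
  \<open>\<D>(X \<times> Y)\<close> is 1-Lipschitz in \<open>x\<close> for each fixed \<open>y\<close>, so after disintegration its
  value is bounded by the left-hand side.\<close>

lemma lipschitz_on_borel_measurable:
  fixes f :: "'a::metric_space \<Rightarrow> real"
  assumes "L-lipschitz_on UNIV f" and "sets M = sets borel"
  shows "f \<in> borel_measurable M"
  using borel_measurable_continuous_onI[OF lipschitz_on_continuous_on[OF assms(1)]]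
  unfolding measurable_cong_sets[OF assms(2) refl] .

lemma lipschitz_on_dist: "1-lipschitz_on U (\<lambda>x. dist x a)"
proof (rule lipschitz_onI)
  show "dist (dist x a) (dist y a) \<le> 1 * dist x y" for x y
    using dist_triangle[of x a y] dist_triangle[of y a x] by (simp add: dist_real_def dist_commute abs_le_iff)
qed simp

lemma lipschitz_on_integrable:
  fixes f :: "'a::{banach,second_countable_topology} \<Rightarrow> real"
  assumes L: "L-lipschitz_on UNIV f" and "finite_measure M" and M: "sets M = sets borel"
    and moment: "integrable M norm"
  shows "integrable M f"
proof (rule Bochner_Integration.integrable_bound)
  interpret finite_measure M by fact
  show "integrable M (\<lambda>x. \<bar>f 0\<bar> + L * norm x)"
    using moment by simp
  show "f \<in> borel_measurable M"
    using L M by (rule lipschitz_on_borel_measurable)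
  have "\<bar>f x\<bar> \<le> \<bar>f 0\<bar> + L * norm x" for x
    using lipschitz_onD[OF L, of x 0] abs_triangle_ineq2[of "f x" "f 0"]
    by (simp add: dist_real_def dist_norm)
  then show "AE x in M. norm (f x) \<le> norm (\<bar>f 0\<bar> + L * norm x)"
    using lipschitz_on_nonneg[OF L] by (intro AE_I2) simp
qed

lemma (in prob_space) distr_pair_snd:
  assumes "sigma_finite_measure N"
  shows "distr (M \<Otimes>\<^sub>M N) N snd = N"
proof (intro measure_eqI)
  interpret N: sigma_finite_measure N by fact
  fix A assume A: "A \<in> sets (distr (M \<Otimes>\<^sub>M N) N snd)"
  then have "emeasure (distr (M \<Otimes>\<^sub>M N) N snd) A = emeasure (M \<Otimes>\<^sub>M N) (space M \<times> A)"
    by (auto simp: emeasure_distr space_pair_measure dest: sets.sets_into_space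
             intro!: arg_cong2[where f=emeasure])
  with A show "emeasure (distr (M \<Otimes>\<^sub>M N) N snd) A = emeasure N A"
    by (simp add: N.emeasure_pair_measure_Times emeasure_space_1)
qed simp

lemma integral_pair_measure_diff:
  fixes f :: "'a \<Rightarrow> real"
  assumes "prob_space M" "prob_space N" and f: "integrable M f" "integrable N f"
  shows "(\<integral>p. f (fst p) - f (snd p) \<partial>(M \<Otimes>\<^sub>M N)) = (\<integral>x. f x \<partial>M) - (\<integral>x. f x \<partial>N)"
proof -
  have fst: "distr (M \<Otimes>\<^sub>M N) M fst = M"
    using prob_space.distr_pair_fst[OF assms(2)] .
  have snd: "distr (M \<Otimes>\<^sub>M N) N snd = N"
    using assms(1,2) by (simp add: prob_space.distr_pair_snd prob_space_imp_sigma_finite)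
  have [measurable]: "f \<in> borel_measurable M" "f \<in> borel_measurable N"
    using f by auto
  have "integrable (M \<Otimes>\<^sub>M N) (\<lambda>p. f (fst p))" "integrable (M \<Otimes>\<^sub>M N) (\<lambda>p. f (snd p))"
    using f integrable_distr_eq[of fst "M \<Otimes>\<^sub>M N" M f] integrable_distr_eq[of snd "M \<Otimes>\<^sub>M N" N f]
    by (simp_all add: fst snd)
  moreover have "(\<integral>p. f (fst p) \<partial>(M \<Otimes>\<^sub>M N)) = (\<integral>x. f x \<partial>M)"
    using integral_distr[of fst "M \<Otimes>\<^sub>M N" M f] by (simp add: fst)
  moreover have "(\<integral>p. f (snd p) \<partial>(M \<Otimes>\<^sub>M N)) = (\<integral>x. f x \<partial>N)"
    using integral_distr[of snd "M \<Otimes>\<^sub>M N" N f] by (simp add: snd)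
  ultimately show ?thesis
    by simp
qed

lemma (in prob_space) abs_integral_le_const:
  fixes f :: "'a \<Rightarrow> real"
  assumes [measurable]: "f \<in> borel_measurable M" and bound: "\<And>x. \<bar>f x\<bar> \<le> c"
  shows "\<bar>\<integral>x. f x \<partial>M\<bar> \<le> c"
proof -
  have "integrable M f"
    using bound by (intro integrable_const_bound[where B=c]) simp_all
  have "\<bar>\<integral>x. f x \<partial>M\<bar> \<le> (\<integral>x. \<bar>f x\<bar> \<partial>M)"
    using integral_norm_bound[of M f] by simp
  also have "\<dots> \<le> (\<integral>x. c \<partial>M)"
    using \<open>integrable M f\<close> bound by (intro integral_mono) auto
  finally show ?thesis
    by (simp add: prob_space)
qed

lemma e2ennreal_SUP: "I \<noteq> {} \<Longrightarrow> e2ennreal (SUP i\<in>I. f i) = (SUP i\<in>I. e2ennreal (f i))"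
  using continuous_at_Sup_mono[of e2ennreal "f ` I"]
  by (simp add: continuous_at_e2ennreal e2ennreal_mono mono_def image_comp)

lemma enn2ereal_SUP: "I \<noteq> {} \<Longrightarrow> enn2ereal (SUP i\<in>I. f i) = (SUP i\<in>I. enn2ereal (f i))"
  using continuous_at_Sup_mono[of enn2ereal "f ` I"]
  by (simp add: continuous_at_enn2ereal less_eq_ennreal.rep_eq mono_def image_comp)

lemma ereal_integral_le_nn_integral:
  fixes f :: "'a \<Rightarrow> real"
  assumes "integrable M f"
  shows "ereal (\<integral>x. f x \<partial>M) \<le> enn2ereal (\<integral>\<^sup>+x. ennreal (f x) \<partial>M)"
proof -
  have pos: "integrable M (\<lambda>x. max (f x) 0)"
    using assms by (intro integrable_max) simp_all
  have "(\<integral>x. f x \<partial>M) \<le> (\<integral>x. max (f x) 0 \<partial>M)"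
    using assms pos by (rule integral_mono) simp
  also have "ennreal (\<integral>x. max (f x) 0 \<partial>M) = (\<integral>\<^sup>+x. ennreal (f x) \<partial>M)"
    using nn_integral_eq_integral[OF pos] by simp
  ultimately show ?thesis
    by (metis enn2ereal_ennreal ereal_less_eq(3) integral_nonneg_AE AE_I2 max.cobounded2)
qed

lemma integral_bind_nonneg:
  fixes f :: "'b \<Rightarrow> real"
  assumes N[measurable]: "N \<in> M \<rightarrow>\<^sub>M subprob_algebra B"
    and f[measurable]: "f \<in> borel_measurable B" and nonneg: "\<And>x. 0 \<le> f x"
    and int: "integrable (M \<bind> N) f"
  shows "AE x in M. integrable (N x) f"
    and "integrable M (\<lambda>x. \<integral>y. f y \<partial>N x)"
    and "(\<integral>x. f x \<partial>(M \<bind> N)) = (\<integral>x. \<integral>y. f y \<partial>N x \<partial>M)"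
proof -
  have bind: "(\<integral>\<^sup>+x. f x \<partial>(M \<bind> N)) = (\<integral>\<^sup>+x. \<integral>\<^sup>+y. f y \<partial>N x \<partial>M)"
    by (rule nn_integral_bind[OF _ N]) simp
  have finite: "(\<integral>\<^sup>+x. f x \<partial>(M \<bind> N)) < \<infinity>"
    using int nonneg by (simp add: integrable_iff_bounded)
  have meas: "f \<in> borel_measurable (N x)" if "x \<in> space M" for x
    using f unfolding measurable_cong_sets[OF sets_kernel[OF N that] refl] .
  have "AE x in M. (\<integral>\<^sup>+y. f y \<partial>N x) \<noteq> \<infinity>"
    using finite bind
    by (intro nn_integral_PInf_AE) (simp_all add: measurable_compose[OF N nn_integral_measurable_subprob_algebra])
  then show "AE x in M. integrable (N x) f"
    using AE_space by eventually_elim (simp add: integrable_iff_bounded nonneg top.not_eq_extremum meas)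
  then have "AE x in M. (\<integral>\<^sup>+y. f y \<partial>N x) = ennreal (\<integral>y. f y \<partial>N x)"
    by eventually_elim (simp add: nn_integral_eq_integral nonneg)
  then have inner: "(\<integral>\<^sup>+x. ennreal (\<integral>y. f y \<partial>N x) \<partial>M) = (\<integral>\<^sup>+x. f x \<partial>(M \<bind> N))"
    using bind by (simp add: nn_integral_cong_AE)
  have [measurable]: "(\<lambda>x. \<integral>y. f y \<partial>N x) \<in> borel_measurable M"
    by (rule measurable_compose[OF N integral_measurable_subprob_algebra]) simp
  show "integrable M (\<lambda>x. \<integral>y. f y \<partial>N x)"
    using inner finite by (simp add: integrable_iff_bounded nonneg)
  have "(\<integral>x. \<integral>y. f y \<partial>N x \<partial>M) = enn2real (\<integral>\<^sup>+x. ennreal (\<integral>y. f y \<partial>N x) \<partial>M)"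
    by (rule integral_eq_nn_integral) (simp_all add: nonneg)
  also have "\<dots> = (\<integral>x. f x \<partial>(M \<bind> N))"
    using inner int by (simp add: integral_eq_nn_integral nonneg)
  finally show "(\<integral>x. f x \<partial>(M \<bind> N)) = (\<integral>x. \<integral>y. f y \<partial>N x \<partial>M)"
    by simp
qed

lemma integral_bind_integrable:
  fixes f :: "'b \<Rightarrow> real"
  assumes N[measurable]: "N \<in> M \<rightarrow>\<^sub>M subprob_algebra B"
    and f[measurable]: "f \<in> borel_measurable B"
    and int: "integrable (M \<bind> N) f"
  shows "integrable M (\<lambda>x. \<integral>y. f y \<partial>N x)"
    and "(\<integral>x. f x \<partial>(M \<bind> N)) = (\<integral>x. \<integral>y. f y \<partial>N x \<partial>M)"
proof -
  define pos neg where "pos y = max (f y) 0" and "neg y = max (- f y) 0" for y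
  have meas_pos[measurable]: "pos \<in> borel_measurable B"
    and meas_neg[measurable]: "neg \<in> borel_measurable B"
    unfolding pos_def neg_def by simp_all
  have int_pos: "integrable (M \<bind> N) pos" and int_neg: "integrable (M \<bind> N) neg"
    unfolding pos_def neg_def using int by simp_all
  have "0 \<le> pos y" "0 \<le> neg y" for y
    by (simp_all add: pos_def neg_def)
  note pos = integral_bind_nonneg[OF N meas_pos this(1) int_pos]
    and neg = integral_bind_nonneg[OF N meas_neg this(2) int_neg]
  have f_split: "f y = pos y - neg y" for y
    by (simp add: pos_def neg_def)
  have meas_inner[measurable]: "(\<lambda>x. \<integral>y. f y \<partial>N x) \<in> borel_measurable M"
    by (rule measurable_compose[OF N integral_measurable_subprob_algebra]) simp
  have int_split: "integrable M (\<lambda>x. (\<integral>y. pos y \<partial>N x) - (\<integral>y. neg y \<partial>N x))"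
    using pos(2) neg(2) by simp
  have AE_split: "AE x in M. (\<integral>y. pos y \<partial>N x) - (\<integral>y. neg y \<partial>N x) = (\<integral>y. f y \<partial>N x)"
    using pos(1) neg(1) by eventually_elim (simp add: f_split)
  show "integrable M (\<lambda>x. \<integral>y. f y \<partial>N x)"
    by (rule integrable_cong_AE_imp[OF int_split meas_inner AE_split])
  have "(\<integral>x. f x \<partial>(M \<bind> N)) = (\<integral>x. pos x \<partial>(M \<bind> N)) - (\<integral>x. neg x \<partial>(M \<bind> N))"
    using int_pos int_neg by (simp add: f_split)
  also have "\<dots> = (\<integral>x. (\<integral>y. pos y \<partial>N x) - (\<integral>y. neg y \<partial>N x) \<partial>M)"
    using pos(2,3) neg(2,3) by simp
  also have "\<dots> = (\<integral>x. \<integral>y. f y \<partial>N x \<partial>M)"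
    using int_split by (intro integral_cong_AE AE_split) auto
  finally show "(\<integral>x. f x \<partial>(M \<bind> N)) = (\<integral>x. \<integral>y. f y \<partial>N x \<partial>M)" .
qed

lemma wasserstein_space_integrable_norm:
  assumes "p \<in> wasserstein_space"
  shows "integrable p norm"
proof -
  have [measurable_cong]: "sets p = sets borel" and "(\<integral>\<^sup>+ x. norm x \<partial>p) < \<infinity>"
    using assms by (auto simp: wasserstein_space_def)
  then show ?thesis
    by (simp add: integrable_iff_bounded)
qed

lemma integrable_norm_if_wasserstein_finite:
  fixes p q :: "'a::{banach,second_countable_topology} measure"
  assumes p: "p \<in> wasserstein_space" and W: "wasserstein p q < \<top>" and q: "sets q = sets borel"
  shows "integrable q norm"
proof -
  obtain \<gamma> where "\<gamma> \<in> couplings p q" and cost: "(\<integral>\<^sup>+z. norm (fst z - snd z) \<partial>\<gamma>) < \<top>"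
    using W by (auto simp: wasserstein_def INF_less_iff)
  then have sets_\<gamma>: "sets \<gamma> = sets (p \<Otimes>\<^sub>M q)" and fst: "distr \<gamma> p fst = p" and snd: "distr \<gamma> q snd = q"
    by (auto simp: couplings_def)
  have sets_p: "sets p = sets borel" and moment_p: "(\<integral>\<^sup>+ x. norm x \<partial>p) < \<infinity>"
    using p by (auto simp: wasserstein_space_def)
  note [measurable_cong] = sets_\<gamma> sets_p q
  have "(\<integral>\<^sup>+ x. norm x \<partial>q) = (\<integral>\<^sup>+ z. norm (snd z) \<partial>\<gamma>)"
    by (subst snd[symmetric]) (simp add: nn_integral_distr)
  also have "\<dots> \<le> (\<integral>\<^sup>+ z. ennreal (norm (fst z)) + ennreal (norm (fst z - snd z)) \<partial>\<gamma>)"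
    by (intro nn_integral_mono) (simp add: ennreal_plus[symmetric] del: ennreal_plus, norm)
  also have "\<dots> = (\<integral>\<^sup>+ z. norm (fst z) \<partial>\<gamma>) + (\<integral>\<^sup>+ z. norm (fst z - snd z) \<partial>\<gamma>)"
    by (rule nn_integral_add) simp_all
  also have "(\<integral>\<^sup>+ z. norm (fst z) \<partial>\<gamma>) = (\<integral>\<^sup>+ x. norm x \<partial>p)"
    by (subst fst[symmetric]) (simp add: nn_integral_distr)
  finally have "(\<integral>\<^sup>+ x. norm x \<partial>q) < \<infinity>"
    using moment_p cost by (simp add: order_le_less_trans)
  then show ?thesis
    by (simp add: integrable_iff_bounded)
qed

section \<open>A countable family of bounded 1-Lipschitz functions\<close>

definition cone_envelope :: "(nat \<Rightarrow> 'a::metric_space) \<Rightarrow> (nat \<times> rat) list \<Rightarrow> 'a \<Rightarrow> real" where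
  "cone_envelope d l x =
     (if l = [] then 0 else Min ((\<lambda>(n, r). real_of_rat r + dist x (d n)) ` set l))"

lemma cone_envelope_le: "(n, r) \<in> set l \<Longrightarrow> cone_envelope d l x \<le> real_of_rat r + dist x (d n)"
  unfolding cone_envelope_def by (auto intro!: Min_le)

lemma cone_envelope_ge:
  "l \<noteq> [] \<Longrightarrow> (\<And>n r. (n, r) \<in> set l \<Longrightarrow> c \<le> real_of_rat r + dist x (d n)) \<Longrightarrow> c \<le> cone_envelope d l x"
  unfolding cone_envelope_def by auto

lemma cone_envelope_le_dist: "cone_envelope d l x \<le> cone_envelope d l y + dist x y"
proof (cases "l = []")
  case True
  then show ?thesis
    by (simp add: cone_envelope_def)
next
  case False
  then have "cone_envelope d l y \<in> (\<lambda>(n, r). real_of_rat r + dist y (d n)) ` set l"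
    unfolding cone_envelope_def by (auto intro!: Min_in)
  then obtain n r where nr: "(n, r) \<in> set l" "cone_envelope d l y = real_of_rat r + dist y (d n)"
    by auto
  have "cone_envelope d l x \<le> real_of_rat r + dist x (d n)"
    using nr(1) by (rule cone_envelope_le)
  also have "\<dots> \<le> real_of_rat r + dist y (d n) + dist x y"
    using dist_triangle[of x "d n" y] by simp
  finally show ?thesis
    using nr(2) by simp
qed

lemma lipschitz_cone_envelope: "1-lipschitz_on UNIV (cone_envelope d l)"
proof (rule lipschitz_onI)
  show "dist (cone_envelope d l x) (cone_envelope d l y) \<le> 1 * dist x y" for x y
    using cone_envelope_le_dist[of d l x y] cone_envelope_le_dist[of d l y x]
    by (simp add: dist_real_def dist_commute abs_le_iff)
qed simp

lemma rat_approx_from_above: "\<exists>q. t < real_of_rat q \<and> real_of_rat q < t + 1 / real (Suc N)"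
  using Rats_dense_in_real[of t "t + 1 / real (Suc N)"] by (auto elim!: Rats_cases)

text \<open>McShane's formula \<open>f x = inf\<^sub>n (f (d n) + dist x (d n))\<close> over the dense sequence \<open>d\<close>,
  truncated to the first \<open>N + 1\<close> points and with rational values slightly above \<open>f (d n)\<close>.\<close>
lemma cone_envelope_tendsto:
  fixes f :: "'a::metric_space \<Rightarrow> real"
  assumes dense: "\<And>x e. 0 < e \<Longrightarrow> \<exists>n. dist x (d n) < e" and f: "1-lipschitz_on UNIV f"
  obtains ls where "\<And>x. (\<lambda>N. cone_envelope d (ls N) x) \<longlonglongrightarrow> f x"
    and "\<And>N x. f x \<le> cone_envelope d (ls N) x"
    and "\<And>N x. cone_envelope d (ls N) x \<le> f (d 0) + 1 + dist x (d 0)"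
proof
  define q where "q N n = (SOME q. f (d n) < real_of_rat q \<and> real_of_rat q < f (d n) + 1 / real (Suc N))"
    for N n
  have q: "f (d n) < real_of_rat (q N n)" "real_of_rat (q N n) < f (d n) + 1 / real (Suc N)" for N n
    using someI_ex[OF rat_approx_from_above] unfolding q_def by blast+
  define ls where "ls N = map (\<lambda>n. (n, q N n)) [0..<Suc N]" for N
  have f_le: "f x \<le> f y + dist x y" for x y
    using lipschitz_onD[OF f, of x y] by (simp add: dist_real_def)
  show lower: "f x \<le> cone_envelope d (ls N) x" for N x
  proof (rule cone_envelope_ge)
    fix n r assume "(n, r) \<in> set (ls N)"
    then have "r = q N n"
      by (auto simp: ls_def)
    then show "f x \<le> real_of_rat r + dist x (d n)"
      using f_le[of x "d n"] q(1)[of n N] by simp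
  qed (simp add: ls_def)
  have upper: "cone_envelope d (ls N) x \<le> f (d n) + 1 / real (Suc N) + dist x (d n)" if "n \<le> N" for N n x
  proof -
    have "(n, q N n) \<in> set (ls N)"
      unfolding ls_def set_map by (rule imageI) (use that in auto)
    then show ?thesis
      using cone_envelope_le[of n "q N n" "ls N" d x] q(2)[of N n] by linarith
  qed
  show "cone_envelope d (ls N) x \<le> f (d 0) + 1 + dist x (d 0)" for N x
  proof -
    have "1 / real (Suc N) \<le> 1"
      by simp
    then show ?thesis
      using upper[of 0 N x] by linarith
  qed
  show "(\<lambda>N. cone_envelope d (ls N) x) \<longlonglongrightarrow> f x" for x
  proof (rule LIMSEQ_I)
    fix e :: real assume "0 < e"
    then obtain n where n: "dist x (d n) < e / 3"
      using dense[of "e / 3"] by auto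
    obtain N0 where N0: "1 / real (Suc N0) < e / 3"
      using reals_Archimedean[of "e / 3"] \<open>0 < e\<close> by (auto simp: inverse_eq_divide)
    show "\<exists>N0. \<forall>N\<ge>N0. norm (cone_envelope d (ls N) x - f x) < e"
    proof (intro exI allI impI)
      fix N assume N: "max n N0 \<le> N"
      then have "1 / real (Suc N) \<le> 1 / real (Suc N0)"
        by (simp add: frac_le)
      then have "cone_envelope d (ls N) x < f x + e"
        using upper[of n N x] N n N0 f_le[of "d n" x] by (simp add: dist_commute)
      then show "norm (cone_envelope d (ls N) x - f x) < e"
        using lower[of x N] by simp
    qed
  qed
qed

definition clip :: "real \<Rightarrow> real \<Rightarrow> real" where
  "clip c t = max (- c) (min c t)"

lemma lipschitz_clip: "1-lipschitz_on UNIV (clip c)"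
  by (intro lipschitz_onI) (auto simp: clip_def dist_real_def)

lemma abs_clip_le: "0 \<le> c \<Longrightarrow> \<bar>clip c t\<bar> \<le> \<bar>t\<bar>"
  and abs_clip_le_bound: "0 \<le> c \<Longrightarrow> \<bar>clip c t\<bar> \<le> c"
  and clip_eq: "\<bar>t\<bar> \<le> c \<Longrightarrow> clip c t = t"
  by (auto simp: clip_def)

definition lip_approx :: "(nat \<Rightarrow> 'a::metric_space) \<Rightarrow> (nat \<times> rat) list \<times> nat \<Rightarrow> 'a \<Rightarrow> real" where
  "lip_approx d p x = clip (real (snd p)) (cone_envelope d (fst p) x)"

lemma lipschitz_lip_approx: "1-lipschitz_on UNIV (lip_approx d p)"
  using lipschitz_on_compose[OF lipschitz_cone_envelope lipschitz_clip[THEN lipschitz_on_subset]]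
  by (simp add: lip_approx_def comp_def)

lemma abs_lip_approx_le: "\<bar>lip_approx d p x\<bar> \<le> real (snd p)"
  by (simp add: lip_approx_def abs_clip_le_bound)

lemma lip_approx_tendsto:
  fixes f :: "'a::metric_space \<Rightarrow> real"
  assumes dense: "\<And>x e. 0 < e \<Longrightarrow> \<exists>n. dist x (d n) < e" and f: "1-lipschitz_on UNIV f"
  obtains ps where "\<And>x. (\<lambda>N. lip_approx d (ps N) x) \<longlonglongrightarrow> f x"
    and "\<And>N x. \<bar>lip_approx d (ps N) x\<bar> \<le> \<bar>f x\<bar> + \<bar>f (d 0)\<bar> + 1 + dist x (d 0)"
proof -
  obtain ls where lim: "\<And>x. (\<lambda>N. cone_envelope d (ls N) x) \<longlonglongrightarrow> f x"
    and lower: "\<And>N x. f x \<le> cone_envelope d (ls N) x"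
    and upper: "\<And>N x. cone_envelope d (ls N) x \<le> f (d 0) + 1 + dist x (d 0)"
    using cone_envelope_tendsto[OF dense f] by blast
  show ?thesis
  proof
    show "(\<lambda>N. lip_approx d (ls N, N) x) \<longlonglongrightarrow> f x" for x
    proof -
      obtain N0 :: nat where N0: "\<bar>f x\<bar> + 1 \<le> real N0"
        using real_arch_simple by blast
      have "\<forall>\<^sub>F N in sequentially. dist (cone_envelope d (ls N) x) (f x) < 1 \<and> N0 \<le> N"
        using lim[of x] by (intro eventually_conj) (simp_all add: tendsto_iff)
      then have "\<forall>\<^sub>F N in sequentially. cone_envelope d (ls N) x = lip_approx d (ls N, N) x"
        by eventually_elim (use N0 in \<open>auto simp: lip_approx_def dist_real_def intro!: clip_eq[symmetric]\<close>)
      then show ?thesis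
        using lim[of x] by (rule Lim_transform_eventually[rotated])
    qed
    show "\<bar>lip_approx d (ls N, N) x\<bar> \<le> \<bar>f x\<bar> + \<bar>f (d 0)\<bar> + 1 + dist x (d 0)" for N x
    proof -
      have "\<bar>cone_envelope d (ls N) x\<bar> \<le> \<bar>f x\<bar> + \<bar>f (d 0)\<bar> + 1 + dist x (d 0)"
        using lower[of x N] upper[of N x] zero_le_dist[of x "d 0"]
          abs_ge_self[of "f (d 0)"] abs_ge_minus_self[of "f x"] abs_ge_zero[of "f x"] abs_ge_zero[of "f (d 0)"]
        unfolding abs_le_iff by linarith
      then show ?thesis
        using abs_clip_le[of "real N" "cone_envelope d (ls N) x"] by (simp add: lip_approx_def)
    qed
  qed
qed

definition dense_seq :: "nat \<Rightarrow> 'a::{metric_space,second_countable_topology}" where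
  "dense_seq = (SOME d. \<forall>x e. 0 < e \<longrightarrow> (\<exists>n. dist x (d n) < e))"

lemma dense_seq: "0 < e \<Longrightarrow> \<exists>n. dist x (dense_seq n) < e"
proof -
  obtain D :: "'a set" where "countable D" and D: "\<And>X. open X \<Longrightarrow> X \<noteq> {} \<Longrightarrow> \<exists>d\<in>D. d \<in> X"
    using countable_dense_exists by blast
  have "D \<noteq> {}"
    using D[of UNIV] by auto
  have "\<exists>n. dist x (from_nat_into D n) < e" if e: "0 < e" for x and e :: real
  proof -
    obtain p where "p \<in> D" "p \<in> ball x e"
      using D[of "ball x e"] e by auto
    then show ?thesis
      by (metis from_nat_into_surj[OF \<open>countable D\<close>] mem_ball)
  qed
  then have "\<exists>d :: nat \<Rightarrow> 'a. \<forall>x e. 0 < e \<longrightarrow> (\<exists>n. dist x (d n) < e)"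
    by blast
  from someI_ex[OF this] show "0 < e \<Longrightarrow> \<exists>n. dist x (dense_seq n) < e"
    unfolding dense_seq_def by blast
qed

text \<open>The zero function is put first so that running maxima over the family are nonnegative.\<close>
definition lip_seq :: "nat \<Rightarrow> 'a::{metric_space,second_countable_topology} \<Rightarrow> real" where
  "lip_seq k = (case k of 0 \<Rightarrow> (\<lambda>_. 0) | Suc j \<Rightarrow> lip_approx dense_seq (from_nat j))"

lemma lip_seq_0 [simp]: "lip_seq 0 = (\<lambda>_. 0)"
  by (simp add: lip_seq_def)

lemma lip_approx_eq_lip_seq: "lip_approx dense_seq p = lip_seq (Suc (to_nat p))"
  by (simp add: lip_seq_def)

lemma lip_seq_Lip1: "lip_seq k \<in> Lip1"
  by (cases k) (auto simp: lip_seq_def Lip1_def lipschitz_lip_approx intro: lipschitz_onI)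

lemma borel_measurable_lip_seq [measurable]: "lip_seq k \<in> borel_measurable borel"
  using lip_seq_Lip1[of k] unfolding Lip1_def by (auto intro: lipschitz_on_borel_measurable)

lemma lip_seq_bounded:
  obtains B :: "nat \<Rightarrow> real" where "\<And>k x. \<bar>lip_seq k x\<bar> \<le> B k"
proof
  fix k and x :: 'a
  show "\<bar>lip_seq k x\<bar> \<le> (case k of 0 \<Rightarrow> 0 | Suc j \<Rightarrow> real (snd (from_nat j :: (nat \<times> rat) list \<times> nat)))"
    by (cases k) (simp_all add: lip_seq_def abs_lip_approx_le)
qed

lemma SUP_Lip1_eq_SUP_lip_seq:
  fixes M N :: "'a::{banach,second_countable_topology} measure"
  assumes "finite_measure M" "finite_measure N" and "sets M = sets borel" "sets N = sets borel"
    and "integrable M norm" "integrable N norm"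
  shows "(SUP f\<in>Lip1. ereal ((\<integral>x. f x \<partial>M) - (\<integral>x. f x \<partial>N)))
       = (SUP k. ereal ((\<integral>x. lip_seq k x \<partial>M) - (\<integral>x. lip_seq k x \<partial>N)))"
proof (rule antisym)
  show "(SUP k. ereal ((\<integral>x. lip_seq k x \<partial>M) - (\<integral>x. lip_seq k x \<partial>N)))
     \<le> (SUP f\<in>Lip1. ereal ((\<integral>x. f x \<partial>M) - (\<integral>x. f x \<partial>N)))"
    by (rule SUP_least) (rule SUP_upper[OF lip_seq_Lip1])
  show "(SUP f\<in>Lip1. ereal ((\<integral>x. f x \<partial>M) - (\<integral>x. f x \<partial>N)))
     \<le> (SUP k. ereal ((\<integral>x. lip_seq k x \<partial>M) - (\<integral>x. lip_seq k x \<partial>N)))"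
  proof (rule SUP_least)
    fix f :: "'a \<Rightarrow> real" assume "f \<in> Lip1"
    then have f: "1-lipschitz_on UNIV f"
      by (simp add: Lip1_def)
    obtain ps where lim: "\<And>x. (\<lambda>i. lip_approx dense_seq (ps i) x) \<longlonglongrightarrow> f x"
      and bound: "\<And>i x. \<bar>lip_approx dense_seq (ps i) x\<bar> \<le> \<bar>f x\<bar> + \<bar>f (dense_seq 0)\<bar> + 1 + dist x (dense_seq 0)"
      using lip_approx_tendsto[OF dense_seq f] by blast
    have conv: "(\<lambda>i. \<integral>x. lip_approx dense_seq (ps i) x \<partial>Q) \<longlonglongrightarrow> (\<integral>x. f x \<partial>Q)"
      if "finite_measure Q" "sets Q = sets borel" "integrable Q norm" for Q
    proof (rule integral_dominated_convergence)
      interpret finite_measure Q by fact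
      show "integrable Q (\<lambda>x. \<bar>f x\<bar> + \<bar>f (dense_seq 0)\<bar> + 1 + dist x (dense_seq 0))"
        using lipschitz_on_integrable[OF f that] lipschitz_on_integrable[OF lipschitz_on_dist that]
        by auto
    qed (use that lim bound in \<open>simp_all add: lipschitz_on_borel_measurable[OF f]
           lipschitz_on_borel_measurable[OF lipschitz_lip_approx]\<close>)
    have "(\<lambda>i. ereal ((\<integral>x. lip_approx dense_seq (ps i) x \<partial>M) - (\<integral>x. lip_approx dense_seq (ps i) x \<partial>N)))
        \<longlonglongrightarrow> ereal ((\<integral>x. f x \<partial>M) - (\<integral>x. f x \<partial>N))"
      by (intro tendsto_ereal tendsto_diff conv assms)
    then show "ereal ((\<integral>x. f x \<partial>M) - (\<integral>x. f x \<partial>N))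
        \<le> (SUP k. ereal ((\<integral>x. lip_seq k x \<partial>M) - (\<integral>x. lip_seq k x \<partial>N)))"
      by (rule Lim_bounded[where M=0]) (auto simp: lip_approx_eq_lip_seq intro: SUP_upper)
  qed
qed

section \<open>Measurable selection of running maximisers\<close>

definition running_argmax :: "(nat \<Rightarrow> 'a \<Rightarrow> 'b::linorder) \<Rightarrow> nat \<Rightarrow> 'a \<Rightarrow> nat" where
  "running_argmax a n x = (LEAST k. k \<le> n \<and> (\<forall>j\<le>n. a j x \<le> a k x))"

lemma running_argmax_le: "running_argmax a n x \<le> n"
  and running_argmax_max: "j \<le> n \<Longrightarrow> a j x \<le> a (running_argmax a n x) x"
proof -
  have "Max ((\<lambda>j. a j x) ` {..n}) \<in> (\<lambda>j. a j x) ` {..n}"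
    by (intro Max_in) auto
  then obtain k where "k \<le> n" "a k x = Max ((\<lambda>j. a j x) ` {..n})"
    by (metis atMost_iff imageE)
  then have "\<exists>k. k \<le> n \<and> (\<forall>j\<le>n. a j x \<le> a k x)"
    by auto
  then have "running_argmax a n x \<le> n \<and> (\<forall>j\<le>n. a j x \<le> a (running_argmax a n x) x)"
    unfolding running_argmax_def by (rule LeastI_ex)
  then show "running_argmax a n x \<le> n" and "j \<le> n \<Longrightarrow> a j x \<le> a (running_argmax a n x) x"
    by blast+
qed

lemma measurable_running_argmax [measurable]:
  fixes a :: "nat \<Rightarrow> 'a \<Rightarrow> real"
  assumes [measurable]: "\<And>k. a k \<in> borel_measurable M"
  shows "running_argmax a n \<in> M \<rightarrow>\<^sub>M count_space UNIV"
  unfolding running_argmax_def by measurable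

lemma nn_integral_SUP_eq_SUP_running_argmax:
  fixes a :: "nat \<Rightarrow> 'a \<Rightarrow> real"
  assumes "finite_measure M"
    and [measurable]: "\<And>k. a k \<in> borel_measurable M"
    and bound: "\<And>k x. \<bar>a k x\<bar> \<le> B k"
    and a0: "\<And>x. a 0 x = 0"
  shows "(\<integral>\<^sup>+x. (SUP k. ennreal (a k x)) \<partial>M) = (SUP n. ennreal (\<integral>x. a (running_argmax a n x) x \<partial>M))"
proof -
  define h where "h n x = a (running_argmax a n x) x" for n x
  have [measurable]: "h n \<in> borel_measurable M" for n
    unfolding h_def by measurable
  have h_int: "integrable M (h n)" for n
  proof -
    interpret finite_measure M by fact
    have "B (running_argmax a n x) \<le> Max (B ` {..n})" for x
      using running_argmax_le[of a n x] by (intro Max_ge) auto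
    then have "\<bar>h n x\<bar> \<le> Max (B ` {..n})" for x
      using order_trans[OF bound] by (simp add: h_def)
    then show ?thesis
      by (intro integrable_const_bound[where B="Max (B ` {..n})"]) auto
  qed
  have "(SUP k. ennreal (a k x)) = (SUP n. ennreal (h n x))" for x
  proof (rule antisym)
    show "(SUP k. ennreal (a k x)) \<le> (SUP n. ennreal (h n x))"
    proof (rule SUP_mono)
      show "\<exists>n\<in>UNIV. ennreal (a k x) \<le> ennreal (h n x)" for k
        using running_argmax_max[of k k a x] by (auto simp: h_def intro!: ennreal_leI)
    qed
    show "(SUP n. ennreal (h n x)) \<le> (SUP k. ennreal (a k x))"
      by (intro SUP_least) (auto simp: h_def intro: SUP_upper)
  qed
  then have "(\<integral>\<^sup>+x. (SUP k. ennreal (a k x)) \<partial>M) = (\<integral>\<^sup>+x. (SUP n. ennreal (h n x)) \<partial>M)"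
    by simp
  also have "\<dots> = (SUP n. \<integral>\<^sup>+x. ennreal (h n x) \<partial>M)"
  proof (rule nn_integral_monotone_convergence_SUP)
    have "h n x \<le> h (Suc n) x" for n x
      using running_argmax_le[of a n x] running_argmax_max[of "running_argmax a n x" "Suc n" a x]
      by (simp add: h_def)
    then show "incseq (\<lambda>n x. ennreal (h n x))"
      by (auto simp: incseq_Suc_iff le_fun_def intro: ennreal_leI)
  qed simp
  also have "\<dots> = (SUP n. ennreal (\<integral>x. h n x \<partial>M))"
  proof -
    have "0 \<le> h n x" for n x
      using running_argmax_max[of 0 n a x] a0 by (simp add: h_def)
    then show ?thesis
      using h_int by (simp add: nn_integral_eq_integral)
  qed
  finally show ?thesis
    by (simp add: h_def)
qed

section \<open>Disintegration of the critic value\<close>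

locale posterior_kernels =
  fixes \<mu> :: "('x::{banach,second_countable_topology} \<times> 'y::{banach,second_countable_topology}) measure"
    and \<sigma> :: "'y measure"
    and \<pi> :: "'y \<Rightarrow> 'x measure"
    and G :: "'y \<Rightarrow> 'x measure"
  assumes prob_space_mu: "prob_space \<mu>"
    and sets_mu [measurable_cong]: "sets \<mu> = sets (borel \<Otimes>\<^sub>M borel)"
    and sigma_def: "\<sigma> = distr \<mu> borel snd"
    and pi_kernel: "\<pi> \<in> \<sigma> \<rightarrow>\<^sub>M prob_algebra borel"
    and disint: "\<mu> = \<sigma> \<bind> (\<lambda>y. distr (\<pi> y) (borel \<Otimes>\<^sub>M borel) (\<lambda>x. (x, y)))"
    and G_kernel: "G \<in> \<sigma> \<rightarrow>\<^sub>M prob_algebra borel"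
begin

lemma sets_sigma [measurable_cong]: "sets \<sigma> = sets borel"
  by (simp add: sigma_def)

lemma space_sigma [simp]: "space \<sigma> = UNIV"
  using sets_eq_imp_space_eq[OF sets_sigma] by simp

lemma space_mu [simp]: "space \<mu> = UNIV"
  using sets_eq_imp_space_eq[OF sets_mu] by (simp add: space_pair_measure)

lemma prob_space_sigma: "prob_space \<sigma>"
  unfolding sigma_def using prob_space_mu by (rule prob_space.prob_space_distr) simp

lemma prob_space_pi: "prob_space (\<pi> y)" and sets_pi [measurable_cong]: "sets (\<pi> y) = sets borel"
  using measurable_space[OF pi_kernel, of y] by (simp_all add: space_prob_algebra)

lemma prob_space_G: "prob_space (G y)" and sets_G [measurable_cong]: "sets (G y) = sets borel"
  using measurable_space[OF G_kernel, of y] by (simp_all add: space_prob_algebra)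

lemma finite_measure_pi: "finite_measure (\<pi> y)" and finite_measure_G: "finite_measure (G y)"
  using prob_space_pi prob_space_G by (simp_all add: prob_space_def)

lemma subprob_kernel_pi [measurable]: "\<pi> \<in> \<sigma> \<rightarrow>\<^sub>M subprob_algebra borel"
  and subprob_kernel_G [measurable]: "G \<in> \<sigma> \<rightarrow>\<^sub>M subprob_algebra borel"
  using pi_kernel G_kernel by (simp_all add: measurable_prob_algebraD)

end

locale posterior_model = posterior_kernels \<mu> \<sigma> \<pi> G
  for \<mu> :: "('x::{banach,second_countable_topology} \<times> 'y::{banach,second_countable_topology}) measure"
    and \<sigma> \<pi> G +
  assumes integrable_pi_norm: "\<And>y. integrable (\<pi> y) norm"
    and integrable_G_norm: "\<And>y. integrable (G y) norm"
begin

text \<open>\<open>joint\<close> is the law of \<open>((X, Y), V)\<close> with \<open>V \<sim> G(Y)\<close>, and \<open>joint_gap D\<close> is the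
  expectation on the right-hand side of the theorem.\<close>

definition cond_gap :: "'y \<Rightarrow> ('x \<Rightarrow> real) \<Rightarrow> real" where
  "cond_gap y f = (\<integral>x. f x \<partial>\<pi> y) - (\<integral>x. f x \<partial>G y)"

definition joint :: "(('x \<times> 'y) \<times> 'x) measure" where
  "joint = \<mu> \<bind> (\<lambda>z. distr (G (snd z)) (\<mu> \<Otimes>\<^sub>M borel) (\<lambda>v. (z, v)))"

definition joint_gap :: "('x \<times> 'y \<Rightarrow> real) \<Rightarrow> real" where
  "joint_gap D = (\<integral>w. D (fst w) - D (snd w, snd (fst w)) \<partial>joint)"

lemma integrable_Lip1:
  assumes "f \<in> Lip1"
  shows "integrable (\<pi> y) f" and "integrable (G y) f"
  using assms unfolding Lip1_def
  by (auto intro: lipschitz_on_integrable[OF _ finite_measure_pi sets_pi integrable_pi_norm]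
      lipschitz_on_integrable[OF _ finite_measure_G sets_G integrable_G_norm])

lemma integral_pair_eq_cond_gap:
  "f \<in> Lip1 \<Longrightarrow> (\<integral>p. f (fst p) - f (snd p) \<partial>(\<pi> y \<Otimes>\<^sub>M G y)) = cond_gap y f"
  unfolding cond_gap_def by (intro integral_pair_measure_diff prob_space_pi prob_space_G integrable_Lip1)

lemma integral_integral_eq_cond_gap:
  assumes "f \<in> Lip1"
  shows "(\<integral>x. \<integral>v. f x - f v \<partial>G y \<partial>\<pi> y) = cond_gap y f"
proof -
  interpret G: prob_space "G y" by (rule prob_space_G)
  interpret \<pi>: prob_space "\<pi> y" by (rule prob_space_pi)
  have "(\<integral>v. f x - f v \<partial>G y) = f x - (\<integral>v. f v \<partial>G y)" for x
    using integrable_Lip1(2)[OF assms] by (simp add: G.prob_space)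
  then show ?thesis
    using integrable_Lip1(1)[OF assms] by (simp add: cond_gap_def \<pi>.prob_space)
qed

lemma SUP_cond_gap_eq_SUP_lip_seq:
  "(SUP f\<in>Lip1. ereal (cond_gap y f)) = (SUP k. ereal (cond_gap y (lip_seq k)))"
  unfolding cond_gap_def
  by (intro SUP_Lip1_eq_SUP_lip_seq finite_measure_pi finite_measure_G
      sets_pi sets_G integrable_pi_norm integrable_G_norm)

lemma borel_measurable_cond_gap [measurable]:
  assumes f: "f \<in> borel_measurable borel"
  shows "(\<lambda>y. cond_gap y f) \<in> borel_measurable \<sigma>"
  unfolding cond_gap_def
  by (intro borel_measurable_diff measurable_compose[OF _ integral_measurable_subprob_algebra[OF f]]
      subprob_kernel_pi subprob_kernel_G)

lemma abs_cond_gap_le: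
  assumes f: "f \<in> borel_measurable borel" and bound: "\<And>x. \<bar>f x\<bar> \<le> c"
  shows "\<bar>cond_gap y f\<bar> \<le> 2 * c"
proof -
  have "f \<in> borel_measurable (\<pi> y)" "f \<in> borel_measurable (G y)"
    using f by (simp_all add: measurable_cong_sets[OF sets_pi refl] measurable_cong_sets[OF sets_G refl])
  then have "\<bar>\<integral>x. f x \<partial>\<pi> y\<bar> \<le> c" "\<bar>\<integral>x. f x \<partial>G y\<bar> \<le> c"
    using prob_space.abs_integral_le_const[OF prob_space_pi _ bound]
      prob_space.abs_integral_le_const[OF prob_space_G _ bound] by auto
  then show ?thesis
    unfolding cond_gap_def by linarith
qed

lemma kernel_disint:
  "(\<lambda>y. distr (\<pi> y) (borel \<Otimes>\<^sub>M borel) (\<lambda>x. (x, y))) \<in> \<sigma> \<rightarrow>\<^sub>M prob_algebra (borel \<Otimes>\<^sub>M borel)"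
  by (rule measurable_distr_prob_space2[OF pi_kernel]) measurable

lemma kernel_joint:
  "(\<lambda>z. distr (G (snd z)) (\<mu> \<Otimes>\<^sub>M borel) (\<lambda>v. (z, v))) \<in> \<mu> \<rightarrow>\<^sub>M prob_algebra (\<mu> \<Otimes>\<^sub>M borel)"
proof (rule measurable_distr_prob_space2)
  show "(\<lambda>z. G (snd z)) \<in> \<mu> \<rightarrow>\<^sub>M prob_algebra borel"
    using G_kernel by (rule measurable_compose[rotated]) simp
qed simp

lemma prob_space_joint: "prob_space joint"
  unfolding joint_def
  by (rule prob_space_bind'[OF _ kernel_joint]) (simp add: space_prob_algebra prob_space_mu)

lemma sets_joint [measurable_cong]: "sets joint = sets ((borel \<Otimes>\<^sub>M borel) \<Otimes>\<^sub>M borel)"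
  unfolding joint_def
  by (subst sets_bind_measurable[OF measurable_prob_algebraD[OF kernel_joint]])
    (simp_all add: sets_pair_measure_cong[OF sets_mu refl])

lemma integral_mu_disint:
  fixes F :: "'x \<times> 'y \<Rightarrow> real"
  assumes F: "integrable \<mu> F"
  shows "integrable \<sigma> (\<lambda>y. \<integral>x. F (x, y) \<partial>\<pi> y)"
    and "(\<integral>z. F z \<partial>\<mu>) = (\<integral>y. \<integral>x. F (x, y) \<partial>\<pi> y \<partial>\<sigma>)"
proof -
  have [measurable]: "F \<in> borel_measurable (borel \<Otimes>\<^sub>M borel)"
    using borel_measurable_integrable[OF F] by (simp add: measurable_cong_sets[OF sets_mu refl])
  have inner: "(\<integral>z. F z \<partial>distr (\<pi> y) (borel \<Otimes>\<^sub>M borel) (\<lambda>x. (x, y))) = (\<integral>x. F (x, y) \<partial>\<pi> y)" for y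
    using integral_distr[of "\<lambda>x. (x, y)" "\<pi> y" "borel \<Otimes>\<^sub>M borel" F] by simp
  note bind = integral_bind_integrable[OF measurable_prob_algebraD[OF kernel_disint], of F]
  show "integrable \<sigma> (\<lambda>y. \<integral>x. F (x, y) \<partial>\<pi> y)"
    using bind(1) F by (simp add: inner disint[symmetric])
  show "(\<integral>z. F z \<partial>\<mu>) = (\<integral>y. \<integral>x. F (x, y) \<partial>\<pi> y \<partial>\<sigma>)"
    using bind(2) F by (simp add: inner disint[symmetric])
qed

lemma integral_joint_disint:
  fixes f :: "('x \<times> 'y) \<times> 'x \<Rightarrow> real"
  assumes f: "integrable joint f"
  shows "integrable \<mu> (\<lambda>z. \<integral>v. f (z, v) \<partial>G (snd z))"
    and "(\<integral>w. f w \<partial>joint) = (\<integral>z. \<integral>v. f (z, v) \<partial>G (snd z) \<partial>\<mu>)"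
proof -
  have [measurable]: "f \<in> borel_measurable (\<mu> \<Otimes>\<^sub>M borel)"
    using borel_measurable_integrable[OF f]
    by (simp add: measurable_cong_sets[OF sets_joint refl] sets_pair_measure_cong[OF sets_mu refl])
  have inner: "(\<integral>w. f w \<partial>distr (G (snd z)) (\<mu> \<Otimes>\<^sub>M borel) (\<lambda>v. (z, v))) = (\<integral>v. f (z, v) \<partial>G (snd z))" for z
  proof -
    have "(\<lambda>v. (z, v)) \<in> G (snd z) \<rightarrow>\<^sub>M \<mu> \<Otimes>\<^sub>M borel"
      by (simp add: measurable_cong_sets[OF sets_G refl])
    then show ?thesis
      using integral_distr[of "\<lambda>v. (z, v)" "G (snd z)" "\<mu> \<Otimes>\<^sub>M borel" f] by simp
  qed
  note bind = integral_bind_integrable[OF measurable_prob_algebraD[OF kernel_joint], of f]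
  show "integrable \<mu> (\<lambda>z. \<integral>v. f (z, v) \<partial>G (snd z))"
    using bind(1) f by (simp add: inner joint_def)
  show "(\<integral>w. f w \<partial>joint) = (\<integral>z. \<integral>v. f (z, v) \<partial>G (snd z) \<partial>\<mu>)"
    using bind(2) f by (simp add: inner joint_def)
qed

lemma joint_gap_eq_integral_cond_gap:
  assumes D: "D \<in> Dset" and int: "integrable joint (\<lambda>w. D (fst w) - D (snd w, snd (fst w)))"
  shows "integrable \<sigma> (\<lambda>y. cond_gap y (\<lambda>x. D (x, y)))"
    and "joint_gap D = (\<integral>y. cond_gap y (\<lambda>x. D (x, y)) \<partial>\<sigma>)"
proof -
  define F where "F = (\<lambda>z. \<integral>v. D z - D (v, snd z) \<partial>G (snd z))"
  have int_F: "integrable \<mu> F" and joint_F: "joint_gap D = (\<integral>z. F z \<partial>\<mu>)"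
    using integral_joint_disint[OF int] by (simp_all add: F_def joint_gap_def)
  have "(\<lambda>x. D (x, y)) \<in> Lip1" for y
    using D by (simp add: Dset_def)
  then have "(\<integral>x. F (x, y) \<partial>\<pi> y) = cond_gap y (\<lambda>x. D (x, y))" for y
    using integral_integral_eq_cond_gap by (simp add: F_def)
  then show "integrable \<sigma> (\<lambda>y. cond_gap y (\<lambda>x. D (x, y)))"
    and "joint_gap D = (\<integral>y. cond_gap y (\<lambda>x. D (x, y)) \<partial>\<sigma>)"
    using integral_mu_disint[OF int_F] joint_F by simp_all
qed

lemma integrable_joint_bounded:
  fixes D :: "'x \<times> 'y \<Rightarrow> real"
  assumes [measurable]: "D \<in> borel_measurable (borel \<Otimes>\<^sub>M borel)" and bound: "\<And>w. \<bar>D w\<bar> \<le> c"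
  shows "integrable joint (\<lambda>w. D (fst w) - D (snd w, snd (fst w)))"
proof -
  interpret prob_space joint
    by (rule prob_space_joint)
  have "\<bar>D (fst w) - D (snd w, snd (fst w))\<bar> \<le> 2 * c" for w
    using bound[of "fst w"] bound[of "(snd w, snd (fst w))"] by linarith
  then show ?thesis
    by (intro integrable_const_bound[where B="2 * c"])
      (simp_all add: measurable_cong_sets[OF sets_joint refl])
qed

lemma joint_gap_le_nn_integral:
  assumes D: "D \<in> Dset"
  shows "ereal (joint_gap D) \<le> enn2ereal (\<integral>\<^sup>+y. e2ennreal (SUP f\<in>Lip1. ereal (cond_gap y f)) \<partial>\<sigma>)"
proof (cases "integrable joint (\<lambda>w. D (fst w) - D (snd w, snd (fst w)))")
  case False
  then show ?thesis
    by (simp add: joint_gap_def not_integrable_integral_eq zero_ereal_def[symmetric])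
next
  case True
  note gap = joint_gap_eq_integral_cond_gap[OF D True]
  have "ennreal (cond_gap y (\<lambda>x. D (x, y))) \<le> e2ennreal (SUP f\<in>Lip1. ereal (cond_gap y f))" for y
  proof -
    have "(\<lambda>x. D (x, y)) \<in> Lip1"
      using D by (simp add: Dset_def)
    then have "ereal (cond_gap y (\<lambda>x. D (x, y))) \<le> (SUP f\<in>Lip1. ereal (cond_gap y f))"
      by (rule SUP_upper)
    then show ?thesis
      using e2ennreal_mono by fastforce
  qed
  then have "(\<integral>\<^sup>+y. ennreal (cond_gap y (\<lambda>x. D (x, y))) \<partial>\<sigma>)
      \<le> (\<integral>\<^sup>+y. e2ennreal (SUP f\<in>Lip1. ereal (cond_gap y f)) \<partial>\<sigma>)"
    by (rule nn_integral_mono)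
  then have "enn2ereal (\<integral>\<^sup>+y. ennreal (cond_gap y (\<lambda>x. D (x, y))) \<partial>\<sigma>)
      \<le> enn2ereal (\<integral>\<^sup>+y. e2ennreal (SUP f\<in>Lip1. ereal (cond_gap y f)) \<partial>\<sigma>)"
    by (simp add: less_eq_ennreal.rep_eq[symmetric])
  moreover have "ereal (joint_gap D) \<le> enn2ereal (\<integral>\<^sup>+y. ennreal (cond_gap y (\<lambda>x. D (x, y))) \<partial>\<sigma>)"
    unfolding gap(2) by (rule ereal_integral_le_nn_integral[OF gap(1)])
  ultimately show ?thesis
    by (rule order_trans[rotated])
qed

lemma lip_seq_selection_critic:
  fixes \<kappa> :: "'y \<Rightarrow> nat"
  assumes \<kappa>_meas: "\<kappa> \<in> \<sigma> \<rightarrow>\<^sub>M count_space UNIV" and \<kappa>_le: "\<And>y. \<kappa> y \<le> n"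
  shows "(\<lambda>w. lip_seq (\<kappa> (snd w)) (fst w :: 'x)) \<in> Dset"
    and "joint_gap (\<lambda>w. lip_seq (\<kappa> (snd w)) (fst w)) = (\<integral>y. cond_gap y (lip_seq (\<kappa> y)) \<partial>\<sigma>)"
proof -
  obtain B where B: "\<And>k (x :: 'x). \<bar>lip_seq k x\<bar> \<le> B k"
    using lip_seq_bounded by blast
  have meas: "(\<lambda>w. lip_seq (\<kappa> (snd w)) (fst w :: 'x)) \<in> borel_measurable (borel \<Otimes>\<^sub>M borel)"
  proof (rule measurable_compose_countable)
    show "(\<lambda>w. \<kappa> (snd w)) \<in> borel \<Otimes>\<^sub>M borel \<rightarrow>\<^sub>M count_space UNIV"
      using \<kappa>_meas by (simp add: measurable_cong_sets[OF sets_sigma refl])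
  qed measurable
  then show critic: "(\<lambda>w. lip_seq (\<kappa> (snd w)) (fst w :: 'x)) \<in> Dset"
    by (simp add: Dset_def lip_seq_Lip1)
  have bound: "\<bar>lip_seq (\<kappa> (snd w)) (fst w)\<bar> \<le> Max (B ` {..n})" for w :: "'x \<times> 'y"
  proof -
    have "B (\<kappa> (snd w)) \<le> Max (B ` {..n})"
      using \<kappa>_le[of "snd w"] by (intro Max_ge) auto
    then show ?thesis
      using B[of "\<kappa> (snd w)" "fst w"] by simp
  qed
  show "joint_gap (\<lambda>w. lip_seq (\<kappa> (snd w)) (fst w)) = (\<integral>y. cond_gap y (lip_seq (\<kappa> y)) \<partial>\<sigma>)"
    using joint_gap_eq_integral_cond_gap(2)[OF critic integrable_joint_bounded[OF meas bound]] by simp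
qed

lemma nn_integral_SUP_cond_gap_attained:
  obtains D :: "nat \<Rightarrow> 'x \<times> 'y \<Rightarrow> real"
  where "\<And>n. D n \<in> Dset"
    and "enn2ereal (\<integral>\<^sup>+y. e2ennreal (SUP f\<in>Lip1. ereal (cond_gap y f)) \<partial>\<sigma>)
       = (SUP n. ereal (joint_gap (D n)))"
proof -
  obtain B where B: "\<And>k (x :: 'x). \<bar>lip_seq k x\<bar> \<le> B k"
    using lip_seq_bounded by blast
  define a where "a k y = cond_gap y (lip_seq k)" for k y
  have a_meas: "a k \<in> borel_measurable \<sigma>" for k
    unfolding a_def by measurable
  have a_bound: "\<bar>a k y\<bar> \<le> 2 * B k" for k y
    unfolding a_def by (rule abs_cond_gap_le) (simp_all add: B)
  have a0: "a 0 y = 0" for y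
    by (simp add: a_def cond_gap_def)
  have "finite_measure \<sigma>"
    using prob_space_sigma by (simp add: prob_space_def)
  note lhs = nn_integral_SUP_eq_SUP_running_argmax[of \<sigma> a "\<lambda>k. 2 * B k", OF this a_meas a_bound a0]
  define D :: "nat \<Rightarrow> 'x \<times> 'y \<Rightarrow> real"
    where "D n = (\<lambda>w. lip_seq (running_argmax a n (snd w)) (fst w))" for n
  note critic = lip_seq_selection_critic[OF measurable_running_argmax[OF a_meas] running_argmax_le]
  have "e2ennreal (SUP f\<in>Lip1. ereal (cond_gap y f)) = (SUP k. ennreal (a k y))" for y
    by (simp add: SUP_cond_gap_eq_SUP_lip_seq e2ennreal_SUP a_def)
  moreover have "0 \<le> (\<integral>y. a (running_argmax a n y) y \<partial>\<sigma>)" for n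
    using running_argmax_max[of 0 n a] a0 by (intro integral_nonneg_AE) simp
  ultimately have "enn2ereal (\<integral>\<^sup>+y. e2ennreal (SUP f\<in>Lip1. ereal (cond_gap y f)) \<partial>\<sigma>)
      = (SUP n. ereal (joint_gap (D n)))"
    using lhs critic(2) by (simp add: D_def a_def enn2ereal_SUP)
  moreover have "D n \<in> Dset" for n
    using critic(1) by (simp add: D_def)
  ultimately show thesis
    using that by blast
qed

theorem nn_integral_SUP_cond_gap_eq_SUP_joint_gap:
  "enn2ereal (\<integral>\<^sup>+y. e2ennreal (SUP f\<in>Lip1. ereal (cond_gap y f)) \<partial>\<sigma>)
    = (SUP D\<in>Dset. ereal (joint_gap D))"
proof (rule antisym)
  obtain D :: "nat \<Rightarrow> 'x \<times> 'y \<Rightarrow> real" where "\<And>n. D n \<in> Dset"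
    and attained: "enn2ereal (\<integral>\<^sup>+y. e2ennreal (SUP f\<in>Lip1. ereal (cond_gap y f)) \<partial>\<sigma>)
       = (SUP n. ereal (joint_gap (D n)))"
    using nn_integral_SUP_cond_gap_attained by blast
  then show "enn2ereal (\<integral>\<^sup>+y. e2ennreal (SUP f\<in>Lip1. ereal (cond_gap y f)) \<partial>\<sigma>)
      \<le> (SUP D\<in>Dset. ereal (joint_gap D))"
    unfolding attained by (intro SUP_least SUP_upper)
  show "(SUP D\<in>Dset. ereal (joint_gap D))
      \<le> enn2ereal (\<integral>\<^sup>+y. e2ennreal (SUP f\<in>Lip1. ereal (cond_gap y f)) \<partial>\<sigma>)"
    by (intro SUP_least joint_gap_le_nn_integral)
qed

end

theorem mainTheorem1:
  fixes \<mu> :: "('x::{banach,second_countable_topology} \<times> 'y::{banach,second_countable_topology}) measure"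
    and \<sigma> :: "'y measure"
    and \<pi> :: "'y \<Rightarrow> 'x measure"
    and G :: "'y \<Rightarrow> 'x measure"
  assumes mu_prob: "prob_space \<mu>"
    and mu_sets: "sets \<mu> = sets (borel \<Otimes>\<^sub>M borel)"
    and sigma_def: "\<sigma> = distr \<mu> borel snd"
    and pi_kernel: "\<pi> \<in> measurable \<sigma> (prob_algebra borel)"
    and disint: "\<mu> = \<sigma> \<bind> (\<lambda>y. distr (\<pi> y) (borel \<Otimes>\<^sub>M borel) (\<lambda>x. (x, y)))"
    and G_kernel: "G \<in> measurable \<sigma> (prob_algebra borel)"
    and G_W: "\<And>y. G y \<in> wasserstein_space"
    and W_finite: "\<And>y. wasserstein (G y) (\<pi> y) < \<top>"
    and W_meas: "(\<lambda>y. enn2real (wasserstein (G y) (\<pi> y))) \<in> borel_measurable \<sigma>"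
  shows "enn2ereal (\<integral>\<^sup>+ y. e2ennreal (SUP D \<in> Lip1.
             ereal (\<integral> p. D (fst p) - D (snd p) \<partial>(\<pi> y \<Otimes>\<^sub>M G y))) \<partial>\<sigma>)
       = (SUP D \<in> Dset.
             ereal (\<integral> w. D (fst w) - D (snd w, snd (fst w))
                  \<partial>(\<mu> \<bind> (\<lambda>z. distr (G (snd z)) (\<mu> \<Otimes>\<^sub>M borel) (\<lambda>v. (z, v))))))"
proof -
  interpret posterior_kernels \<mu> \<sigma> \<pi> G
    using mu_prob mu_sets sigma_def pi_kernel disint G_kernel by (rule posterior_kernels.intro)
  have "integrable (\<pi> y) norm" "integrable (G y) norm" for y
    using integrable_norm_if_wasserstein_finite[OF G_W W_finite sets_pi] G_W
    by (simp_all add: wasserstein_space_integrable_norm)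
  then interpret posterior_model \<mu> \<sigma> \<pi> G
    using posterior_kernels_axioms by (simp add: posterior_model_def posterior_model_axioms_def)
  have "(SUP D\<in>Lip1. ereal (\<integral>p. D (fst p) - D (snd p) \<partial>(\<pi> y \<Otimes>\<^sub>M G y)))
      = (SUP f\<in>Lip1. ereal (cond_gap y f))" for y
    by (rule SUP_cong) (simp_all add: integral_pair_eq_cond_gap)
  then show ?thesis
    using nn_integral_SUP_cond_gap_eq_SUP_joint_gap by (simp add: joint_gap_def joint_def)
qed

end
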